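(* Let $f\colon M\to\mathbb R^3$ be a constant mean curvature surface ($H=1$) with Gauss map $N$ and coordinate frame $F$, in a conformal coordinate $z$ with induced metric $e^u|dz|^2$ and $Q=\langle f_{zz},N\rangle$. Let $F_\lambda\colon\tilde M\to\mathrm{Gl}(2,\mathbb C)$, $\lambda\in\mathbb C_*$, be an extended frame of $f$, i.e. a solution of \[F_\lambda^{-1}(F_\lambda)_z=\begin{pmatrix}-\frac{u_z}4 & Qe^{-u/2}\\ -\frac\lambda2 e^{u/2} & \frac{u_z}4\end{pmatrix},\qquad F_\lambda^{-1}(F_\lambda)_{\bar z}=\begin{pmatrix}\frac{u_{\bar z}}4 & \frac{\lambda^{-1}}2e^{u/2}\\ -\bar Qe^{-u/2} & -\frac{u_{\bar z}}4\end{pmatrix}\] with $F_{\lambda=1}=F$. Then the associated family of flat connections of $N$ is \[d_\lambda=F\cdot d^{F_\lambda}=F\circ\big(d+F_\lambda^{-1}dF_\lambda\big)\circ F^{-1}.\]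
   Context: Identify $\mathbb R^4=\mathbb H$, $\mathbb R^3=\mathrm{Im}\,\mathbb H$, $S^2=\{n\in\mathrm{Im}\,\mathbb H:n^2=-1\}$; identify $\mathbb H$ with matrices via $a_0+ja_1\mapsto\begin{pmatrix}a_0&-\bar a_1\\ a_1&\bar a_0\end{pmatrix}$ ($a_0,a_1\in\mathbb C$), which is left multiplication on $\mathbb C^2=(\mathbb H,I)$, $I$ = right multiplication by $i$, with basis $1,j$; then $\langle v,w\rangle=-\frac12\mathrm{tr}(vw)$ on $\mathbb R^3$. For a conformal immersion $f$ with conformal coordinate $z=x+iy$ and metric $e^u$, the coordinate frame is the (up to sign unique) $F\colon\tilde M\to SU(2)$ with $e^{-u/2}f_x=-iF\sigma_1F^{-1}$, $e^{-u/2}f_y=-iF\sigma_2F^{-1}$, $N=-iF\sigma_3F^{-1}$ ($\sigma_l$ the Pauli matrices), where the Gauss map satisfies $*df=N\,df=-df\,N$ with $*\omega(X)=\omega(J_MX)$. Mean curvature normalized $H=1$, so $(dN)'=\frac12(dN-N*dN)=-df$. $\underline{\mathbb H}=M\times\mathbb H$ has trivial connection $d$; $J$ is left multiplication by $N$, $A=\frac14(J\,dJ+*dJ)$, $A^{(1,0)}=\frac12(A-I*A)$, $A^{(0,1)}=\frac12(A+I*A)$; the associated family is $d_\lambda=d+(\lambda-1)A^{(1,0)}+(\lambda^{-1}-1)A^{(0,1)}$, $\lambda\in\mathbb C_*$. *)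

theory Defs
  imports "HOL-Analysis.Analysis"
begin

text \<open>2x2 complex matrices (endomorphisms of C^2 = (H, I) with basis 1, j) and C^2 vectors.\<close>
type_synonym cmat = "complex^2^2"
type_synonym cvec = "complex^2"

definition mat2 :: "complex \<Rightarrow> complex \<Rightarrow> complex \<Rightarrow> complex \<Rightarrow> cmat" where
  "mat2 a b c d = (\<chi> i j. if i = 1 then (if j = 1 then a else b) else (if j = 1 then c else d))"

definition smul :: "complex \<Rightarrow> cmat \<Rightarrow> cmat" where
  "smul c A = (\<chi> i j. c * A$i$j)"

definition ctr :: "cmat \<Rightarrow> complex" where
  "ctr A = A$1$1 + A$2$2"

definition cadj :: "cmat \<Rightarrow> cmat" where
  "cadj A = (\<chi> i j. cnj (A$j$i))"

definition sigma1 :: cmat where "sigma1 = mat2 0 1 1 0"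
definition sigma2 :: cmat where "sigma2 = mat2 0 (-\<i>) \<i> 0"
definition sigma3 :: cmat where "sigma3 = mat2 1 0 0 (-1)"

text \<open>Quaternion a0 + j a1 as a matrix; Im H; SU(2).\<close>
definition quat_mat :: "complex \<Rightarrow> complex \<Rightarrow> cmat" where
  "quat_mat a0 a1 = mat2 a0 (- cnj a1) a1 (cnj a0)"

definition ImH :: "cmat set" where
  "ImH = {quat_mat a0 a1 | a0 a1. Re a0 = 0}"

definition SU2 :: "cmat set" where
  "SU2 = {A. cadj A ** A = mat 1 \<and> det A = 1}"

text \<open>complex-bilinear extension of <v,w> = -1/2 tr(vw)\<close>
definition cinner :: "cmat \<Rightarrow> cmat \<Rightarrow> complex" where
  "cinner v w = - (1/2) * ctr (v ** w)"

text \<open>Directional (real) derivative of g at p in direction v (v a complex number viewed as a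
  tangent vector of the coordinate domain; v = 1 is d/dx, v = i is d/dy).\<close>
definition pd :: "(complex \<Rightarrow> 'a::real_normed_vector) \<Rightarrow> complex \<Rightarrow> complex \<Rightarrow> 'a" where
  "pd g p v = frechet_derivative g (at p) v"

definition dz :: "(complex \<Rightarrow> cmat) \<Rightarrow> complex \<Rightarrow> cmat" where
  "dz g p = smul (1/2) (pd g p 1 - smul \<i> (pd g p \<i>))"

definition dzbar :: "(complex \<Rightarrow> cmat) \<Rightarrow> complex \<Rightarrow> cmat" where
  "dzbar g p = smul (1/2) (pd g p 1 + smul \<i> (pd g p \<i>))"

definition rdz :: "(complex \<Rightarrow> real) \<Rightarrow> complex \<Rightarrow> complex" where
  "rdz u p = (1/2) * (complex_of_real (pd u p 1) - \<i> * complex_of_real (pd u p \<i>))"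

definition rdzbar :: "(complex \<Rightarrow> real) \<Rightarrow> complex \<Rightarrow> complex" where
  "rdzbar u p = (1/2) * (complex_of_real (pd u p 1) + \<i> * complex_of_real (pd u p \<i>))"

definition gauss :: "(complex \<Rightarrow> cmat) \<Rightarrow> complex \<Rightarrow> cmat" where
  "gauss F p = smul (-\<i>) (F p ** sigma3 ** matrix_inv (F p))"

definition hopfQ :: "(complex \<Rightarrow> cmat) \<Rightarrow> (complex \<Rightarrow> cmat) \<Rightarrow> complex \<Rightarrow> complex" where
  "hopfQ f N p = cinner (dz (dz f) p) (N p)"

text \<open>A = 1/4 (J dJ + *dJ), J = left mult. by N, *w(X) = w(J_M X), J_M X = i X.\<close>
definition connA :: "(complex \<Rightarrow> cmat) \<Rightarrow> complex \<Rightarrow> complex \<Rightarrow> cmat" where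
  "connA N p X = smul (1/4) (N p ** pd N p X + pd N p (\<i> * X))"

text \<open>A^(1,0) = 1/2 (A - I*A), A^(0,1) = 1/2 (A + I*A), I = multiplication by the scalar i on C^2.\<close>
definition connA10 :: "(complex \<Rightarrow> cmat) \<Rightarrow> complex \<Rightarrow> complex \<Rightarrow> cmat" where
  "connA10 N p X = smul (1/2) (connA N p X - smul \<i> (connA N p (\<i> * X)))"

definition connA01 :: "(complex \<Rightarrow> cmat) \<Rightarrow> complex \<Rightarrow> complex \<Rightarrow> cmat" where
  "connA01 N p X = smul (1/2) (connA N p X + smul \<i> (connA N p (\<i> * X)))"

definition assoc_conn :: "(complex \<Rightarrow> cmat) \<Rightarrow> complex \<Rightarrow> (complex \<Rightarrow> cvec) \<Rightarrow> complex \<Rightarrow> complex \<Rightarrow> cvec" where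
  "assoc_conn N lam psi p X =
     pd psi p X + (smul (lam - 1) (connA10 N p X) + smul (inverse lam - 1) (connA01 N p X)) *v psi p"

definition gauge_conn :: "(complex \<Rightarrow> cmat) \<Rightarrow> (complex \<Rightarrow> complex \<Rightarrow> cmat) \<Rightarrow> (complex \<Rightarrow> cvec) \<Rightarrow> complex \<Rightarrow> complex \<Rightarrow> cvec" where
  "gauge_conn G alpha psi p X =
     G p *v (pd (\<lambda>q. matrix_inv (G q) *v psi q) p X + alpha p X *v (matrix_inv (G p) *v psi p))"

definition mc_form :: "(complex \<Rightarrow> cmat) \<Rightarrow> complex \<Rightarrow> complex \<Rightarrow> cmat" where
  "mc_form G p X = matrix_inv (G p) ** pd G p X"

definition extU :: "complex \<Rightarrow> (complex \<Rightarrow> real) \<Rightarrow> (complex \<Rightarrow> complex) \<Rightarrow> complex \<Rightarrow> cmat" where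
  "extU lam u Q p = mat2 (- rdz u p / 4) (Q p * complex_of_real (exp (- u p / 2)))
                         (- lam / 2 * complex_of_real (exp (u p / 2))) (rdz u p / 4)"

definition extV :: "complex \<Rightarrow> (complex \<Rightarrow> real) \<Rightarrow> (complex \<Rightarrow> complex) \<Rightarrow> complex \<Rightarrow> cmat" where
  "extV lam u Q p = mat2 (rdzbar u p / 4) (inverse lam / 2 * complex_of_real (exp (u p / 2)))
                         (- cnj (Q p) * complex_of_real (exp (- u p / 2))) (- rdzbar u p / 4)"

end

theory Submission
  imports Defs
begin

text \<open>Let a_lam = F_lam^-1 dF_lam, a = a_1 and s = -i sigma3, so that N = F s F^-1 and
  dN = F (a s - s a) F^-1. Then F^-1 A F, F^-1 A^(1,0) F and F^-1 A^(0,1) F are forms built from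
  a and s alone, while F o (d + a_lam) o F^-1 = d + F (a_lam - a) F^-1. The theorem thus reduces
  to a pointwise identity of 2x2 matrices: from the explicit a one computes
  F^-1 A^(1,0) F = -(e^(u/2)/2) E21 dz and F^-1 A^(0,1) F = (e^(u/2)/2) E12 dzbar, and these are
  the coefficients of lam - 1 and lam^-1 - 1 in a_lam - a. Only the SU(2)-valuedness of F and the
  extended frame equations are used; the hypotheses on f are what make such a frame exist.\<close>

lemma matrix_add_rdistrib: "((A::cmat) + B) ** C = A ** C + B ** C"
  by (simp add: matrix_matrix_mult_def vec_eq_iff sum.distrib distrib_right)

lemma matrix_diff_ldistrib: "A ** (B - C) = A ** B - A ** (C::cmat)"
  by (simp add: matrix_matrix_mult_def vec_eq_iff sum_subtractf algebra_simps)

lemma matrix_diff_rdistrib: "(A - B) ** C = A ** C - B ** (C::cmat)"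
  by (simp add: matrix_matrix_mult_def vec_eq_iff sum_subtractf algebra_simps)

lemma matrix_mult_minus_left: "(- A) ** B = - (A ** (B::cmat))"
  by (simp add: matrix_matrix_mult_def vec_eq_iff sum_negf)

lemma matrix_mult_minus_right: "A ** (- B) = - (A ** (B::cmat))"
  by (simp add: matrix_matrix_mult_def vec_eq_iff sum_negf)

lemma matrix_vector_mult_minus_left: "(- A) *v v = - ((A::cmat) *v v)"
  by (simp add: matrix_vector_mult_def vec_eq_iff sum_negf)

lemma matrix_mult_smul_left: "smul c A ** B = smul c (A ** (B::cmat))"
  by (simp add: smul_def matrix_matrix_mult_def vec_eq_iff sum_distrib_left mult.assoc)

lemma matrix_mult_smul_right: "A ** smul c B = smul c (A ** (B::cmat))"
  by (simp add: smul_def matrix_matrix_mult_def vec_eq_iff sum_distrib_left mult.left_commute)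

lemma bounded_linear_cadj: "bounded_linear cadj"
  unfolding linear_conv_bounded_linear[symmetric]
  by (auto intro!: linearI simp: cadj_def vec_eq_iff algebra_simps)

lemma bounded_bilinear_matrix_mult: "bounded_bilinear ((**) :: cmat \<Rightarrow> cmat \<Rightarrow> cmat)"
  unfolding bilinear_conv_bounded_bilinear[symmetric] bilinear_def
  by (auto intro!: linearI simp: matrix_add_ldistrib matrix_add_rdistrib matrix_scalar_ac
      scalar_matrix_assoc)

lemma bounded_bilinear_matrix_vector_mult: "bounded_bilinear ((*v) :: cmat \<Rightarrow> cvec \<Rightarrow> cvec)"
  unfolding bilinear_conv_bounded_bilinear[symmetric] bilinear_def
  by (auto intro!: linearI simp: algebra_simps matrix_vector_mult_def vec_eq_iff sum.distrib
      scaleR_sum_right)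

lemma matrix_inv_right: "invertible (A::cmat) \<Longrightarrow> A ** matrix_inv A = mat 1"
  and matrix_inv_left: "invertible (A::cmat) \<Longrightarrow> matrix_inv A ** A = mat 1"
  unfolding invertible_def matrix_inv_def by (metis (mono_tags, lifting) someI_ex)+

lemma matrix_inv_unique:
  assumes "A ** B = mat 1" "B ** A = mat 1"
  shows "matrix_inv (A::cmat) = B"
proof -
  have "matrix_inv A ** A = mat 1"
    using assms by (intro matrix_inv_left) (auto simp: invertible_def)
  then have "matrix_inv A = matrix_inv A ** (A ** B)"
    using assms by (simp add: matrix_mul_assoc)
  then show ?thesis
    using \<open>matrix_inv A ** A = mat 1\<close> by (simp add: matrix_mul_assoc)
qed

lemma SU2_matrix_inv: "A \<in> SU2 \<Longrightarrow> matrix_inv A = cadj A"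
  unfolding SU2_def
  by (metis (mono_tags, lifting) matrix_inv_unique matrix_left_right_inverse mem_Collect_eq)

lemma SU2_invertible: "A \<in> SU2 \<Longrightarrow> invertible A"
  unfolding SU2_def invertible_def
  by (metis (mono_tags, lifting) matrix_left_right_inverse mem_Collect_eq)

lemma pd_eq:
  assumes "(g has_derivative g') (at p)"
  shows "pd g p = g'"
proof
  show "pd g p v = g' v" for v
    using frechet_derivative_at[OF assms] by (simp add: pd_def)
qed

definition conj_mat :: "cmat \<Rightarrow> cmat \<Rightarrow> cmat" where
  "conj_mat G Y = G ** Y ** matrix_inv G"

lemma conj_mat_mult:
  assumes "invertible G"
  shows "conj_mat G Y ** conj_mat G Z = conj_mat G (Y ** Z)"
proof -
  have "conj_mat G Y ** conj_mat G Z = G ** Y ** (matrix_inv G ** G) ** Z ** matrix_inv G"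
    by (simp add: conj_mat_def matrix_mul_assoc)
  then show ?thesis
    by (simp add: conj_mat_def matrix_inv_left[OF assms] matrix_mul_assoc)
qed

lemma conj_mat_add: "conj_mat G Y + conj_mat G Z = conj_mat G (Y + Z)"
  by (simp add: conj_mat_def matrix_add_ldistrib matrix_add_rdistrib)

lemma conj_mat_diff: "conj_mat G Y - conj_mat G Z = conj_mat G (Y - Z)"
  by (simp add: conj_mat_def matrix_diff_ldistrib matrix_diff_rdistrib)

lemma conj_mat_smul: "smul c (conj_mat G Y) = conj_mat G (smul c Y)"
  by (simp add: conj_mat_def matrix_mult_smul_left matrix_mult_smul_right)

lemma gauss_eq_conj_mat: "gauss F = (\<lambda>p. conj_mat (F p) (smul (-\<i>) sigma3))"
  by (rule ext) (simp add: gauss_def conj_mat_def matrix_mult_smul_left matrix_mult_smul_right)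

lemma SU2_matrix_inv_has_derivative:
  assumes G: "(G has_derivative D) (at p)" and U: "open U" "p \<in> U" and SU2: "\<forall>q\<in>U. G q \<in> SU2"
  shows "((\<lambda>q. matrix_inv (G q)) has_derivative
           (\<lambda>h. - (matrix_inv (G p) ** D h ** matrix_inv (G p)))) (at p)"
proof -
  \<comment> \<open>On SU(2) the inverse is the linear map cadj, hence differentiable.\<close>
  have "((\<lambda>q. cadj (G q)) has_derivative (\<lambda>h. cadj (D h))) (at p)"
    using bounded_linear.has_derivative[OF bounded_linear_cadj G] .
  then have inv_D: "((\<lambda>q. matrix_inv (G q)) has_derivative (\<lambda>h. cadj (D h))) (at p)"
    by (rule has_derivative_transform_within_open[OF _ U]) (simp add: SU2 SU2_matrix_inv)
  have "((\<lambda>q. matrix_inv (G q) ** G q) has_derivative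
          (\<lambda>h. matrix_inv (G p) ** D h + cadj (D h) ** G p)) (at p)"
    using bounded_bilinear.FDERIV[OF bounded_bilinear_matrix_mult inv_D G] .
  moreover have "((\<lambda>q. matrix_inv (G q) ** G q) has_derivative (\<lambda>h. 0)) (at p)"
    by (rule has_derivative_transform_within_open[OF has_derivative_const[of "mat 1"] U])
      (simp add: SU2 SU2_invertible matrix_inv_left)
  ultimately have "(\<lambda>h. matrix_inv (G p) ** D h + cadj (D h) ** G p) = (\<lambda>h. 0)"
    by (rule has_derivative_unique)
  then have "matrix_inv (G p) ** D h + cadj (D h) ** G p = 0" for h
    by (rule fun_cong)
  then have "cadj (D h) ** G p = - (matrix_inv (G p) ** D h)" for h
    by (simp add: add_eq_0_iff)
  moreover have "cadj (D h) = cadj (D h) ** G p ** matrix_inv (G p)" for h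
    using SU2 U(2) by (simp add: SU2_invertible matrix_inv_right flip: matrix_mul_assoc)
  ultimately have "cadj (D h) = - (matrix_inv (G p) ** D h ** matrix_inv (G p))" for h
    by (metis matrix_mult_minus_left)
  then show ?thesis
    using inv_D by simp
qed

lemma pd_conj_mat:
  assumes G: "(G has_derivative D) (at p)"
    and Gi: "((\<lambda>q. matrix_inv (G q)) has_derivative
               (\<lambda>h. - (matrix_inv (G p) ** D h ** matrix_inv (G p)))) (at p)"
    and inv: "invertible (G p)"
  shows "pd (\<lambda>q. conj_mat (G q) C) p h
           = conj_mat (G p) (mc_form G p h ** C - C ** mc_form G p h)"
proof -
  define Gi where "Gi = matrix_inv (G p)"
  have "((\<lambda>q. G q ** C ** matrix_inv (G q)) has_derivative
          (\<lambda>h. G p ** C ** - (Gi ** D h ** Gi) + (G p ** 0 + D h ** C) ** Gi)) (at p)"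
    unfolding Gi_def
    by (intro bounded_bilinear.FDERIV[OF bounded_bilinear_matrix_mult] has_derivative_const G Gi)
  then have "pd (\<lambda>q. conj_mat (G q) C) p h = D h ** C ** Gi - G p ** C ** (Gi ** D h ** Gi)"
    unfolding conj_mat_def by (simp add: pd_eq matrix_mult_minus_right)
  also have "\<dots> = conj_mat (G p) (Gi ** D h ** C - C ** (Gi ** D h))"
    using matrix_inv_right[OF inv]
    by (simp add: conj_mat_def Gi_def matrix_diff_ldistrib matrix_diff_rdistrib matrix_mul_assoc)
  finally show ?thesis
    by (simp add: mc_form_def pd_eq[OF G] Gi_def)
qed

lemma gauge_conn_eq:
  assumes G: "(G has_derivative D) (at p)"
    and Gi: "((\<lambda>q. matrix_inv (G q)) has_derivative
               (\<lambda>h. - (matrix_inv (G p) ** D h ** matrix_inv (G p)))) (at p)"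
    and inv: "invertible (G p)"
    and psi: "psi differentiable (at p)"
  shows "gauge_conn G alpha psi p X
           = pd psi p X + conj_mat (G p) (alpha p X - mc_form G p X) *v psi p"
proof -
  define Gi where "Gi = matrix_inv (G p)"
  obtain P where P: "(psi has_derivative P) (at p)"
    using psi by (auto simp: differentiable_def)
  have "((\<lambda>q. matrix_inv (G q) *v psi q) has_derivative
          (\<lambda>h. Gi *v P h + - (Gi ** D h ** Gi) *v psi p)) (at p)"
    unfolding Gi_def using bounded_bilinear.FDERIV[OF bounded_bilinear_matrix_vector_mult Gi P] .
  then have "gauge_conn G alpha psi p X
      = G p *v (Gi *v P X - (Gi ** D X ** Gi) *v psi p + alpha p X *v (Gi *v psi p))"
    by (simp add: gauge_conn_def pd_eq Gi_def matrix_vector_mult_minus_left)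
  also have "\<dots> = P X + (G p ** alpha p X ** Gi - G p ** Gi ** D X ** Gi) *v psi p"
    by (simp add: algebra_simps matrix_vector_mul_assoc matrix_mul_assoc matrix_inv_right[OF inv]
        Gi_def)
  also have "\<dots> = pd psi p X + conj_mat (G p) (alpha p X - mc_form G p X) *v psi p"
    by (simp add: conj_mat_def mc_form_def pd_eq[OF G] pd_eq[OF P] Gi_def matrix_diff_ldistrib
        matrix_diff_rdistrib matrix_mul_assoc)
  finally show ?thesis .
qed

lemma mc_form_wirtinger:
  assumes "G differentiable (at p)"
    and dz: "matrix_inv (G p) ** dz G p = A" and dzbar: "matrix_inv (G p) ** dzbar G p = B"
  shows "mc_form G p h = smul h A + smul (cnj h) B"
proof -
  have lin: "linear (pd G p)"
    using assms(1) by (auto simp: differentiable_def pd_eq dest: has_derivative_linear)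
  have "Re h *\<^sub>R 1 + Im h *\<^sub>R \<i> = h"
    by (simp add: complex_eq_iff)
  then have "pd G p h = Re h *\<^sub>R pd G p 1 + Im h *\<^sub>R pd G p \<i>"
    by (metis linear_add[OF lin] linear_scale[OF lin])
  then have "mc_form G p h = Re h *\<^sub>R mc_form G p 1 + Im h *\<^sub>R mc_form G p \<i>"
    by (simp add: mc_form_def matrix_add_ldistrib matrix_scalar_ac
        flip: scalar_matrix_assoc)
  moreover have "pd G p 1 = dz G p + dzbar G p" and "pd G p \<i> = smul \<i> (dz G p - dzbar G p)"
    by (simp_all add: dz_def dzbar_def smul_def vec_eq_iff field_simps)
  ultimately have "mc_form G p h = Re h *\<^sub>R (A + B) + Im h *\<^sub>R smul \<i> (A - B)"
    by (simp add: mc_form_def matrix_add_ldistrib matrix_diff_ldistrib matrix_mult_smul_right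
        dz dzbar)
  then show ?thesis
    by (simp add: smul_def vec_eq_iff complex_eq_iff algebra_simps)
qed

text \<open>For N = G s G^-1 and a = G^-1 dG, these are G^-1 A G and
  G^-1 ((lam - 1) A^(1,0) + (lam^-1 - 1) A^(0,1)) G.\<close>

definition frame_connA :: "cmat \<Rightarrow> (complex \<Rightarrow> cmat) \<Rightarrow> complex \<Rightarrow> cmat" where
  "frame_connA s a X =
     smul (1/4) (s ** (a X ** s - s ** a X) + (a (\<i> * X) ** s - s ** a (\<i> * X)))"

definition frame_assoc_form :: "complex \<Rightarrow> cmat \<Rightarrow> (complex \<Rightarrow> cmat) \<Rightarrow> complex \<Rightarrow> cmat" where
  "frame_assoc_form lam s a X =
     smul (lam - 1) (smul (1/2) (frame_connA s a X - smul \<i> (frame_connA s a (\<i> * X))))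
   + smul (inverse lam - 1) (smul (1/2) (frame_connA s a X + smul \<i> (frame_connA s a (\<i> * X))))"

lemma assoc_conn_conj_mat:
  assumes inv: "invertible G" and N: "N p = conj_mat G s"
    and dN: "\<And>h. pd N p h = conj_mat G (a h ** s - s ** a h)"
  shows "assoc_conn N lam psi p X = pd psi p X + conj_mat G (frame_assoc_form lam s a X) *v psi p"
proof -
  have "connA N p X = conj_mat G (frame_connA s a X)" for X
    unfolding connA_def frame_connA_def
    by (simp add: N dN conj_mat_mult[OF inv] conj_mat_add conj_mat_smul)
  then show ?thesis
    unfolding assoc_conn_def frame_assoc_form_def connA10_def connA01_def
    by (simp add: conj_mat_add conj_mat_diff conj_mat_smul)
qed

text \<open>The Maurer-Cartan form U dz + V dzbar prescribed by the extended frame equations.\<close>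

definition ext_form ::
    "complex \<Rightarrow> (complex \<Rightarrow> real) \<Rightarrow> (complex \<Rightarrow> complex) \<Rightarrow> complex \<Rightarrow> complex \<Rightarrow> cmat" where
  "ext_form lam u Q p h = smul h (extU lam u Q p) + smul (cnj h) (extV lam u Q p)"

lemma frame_assoc_form_ext_form:
  "frame_assoc_form lam (smul (-\<i>) sigma3) (ext_form 1 u Q p) X
     = ext_form lam u Q p X - ext_form 1 u Q p X"
  unfolding frame_assoc_form_def frame_connA_def ext_form_def
  by (simp add: vec_eq_iff forall_2 smul_def matrix_matrix_mult_def UNIV_2 mat2_def sigma3_def
      extU_def extV_def algebra_simps) (simp add: field_simps)

theorem lemma4p4:
  fixes U :: "complex set"
    and f F :: "complex \<Rightarrow> cmat"
    and u :: "complex \<Rightarrow> real"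
    and Fl :: "complex \<Rightarrow> complex \<Rightarrow> cmat"
  assumes U_open: "open U"
    and f_ImH: "\<forall>p\<in>U. f p \<in> ImH"
    and f_diff: "\<forall>p\<in>U. f differentiable (at p)"
    and f_diff2: "\<forall>p\<in>U. \<forall>v. (\<lambda>q. pd f q v) differentiable (at p)"
    and u_diff: "\<forall>p\<in>U. u differentiable (at p)"
    and F_SU2: "\<forall>p\<in>U. F p \<in> SU2"
    and F_diff: "\<forall>p\<in>U. F differentiable (at p)"
    and frame_x: "\<forall>p\<in>U. smul (complex_of_real (exp (- u p / 2))) (pd f p 1)
                          = smul (-\<i>) (F p ** sigma1 ** matrix_inv (F p))"
    and frame_y: "\<forall>p\<in>U. smul (complex_of_real (exp (- u p / 2))) (pd f p \<i>)
                          = smul (-\<i>) (F p ** sigma2 ** matrix_inv (F p))"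
    and cmc: "\<forall>p\<in>U. \<forall>X. smul (1/2) (pd (gauss F) p X - gauss F p ** pd (gauss F) p (\<i> * X))
                          = - pd f p X"
    and ext_inv: "\<forall>lam. lam \<noteq> 0 \<longrightarrow> (\<forall>p\<in>U. invertible (Fl lam p))"
    and ext_diff: "\<forall>lam. lam \<noteq> 0 \<longrightarrow> (\<forall>p\<in>U. Fl lam differentiable (at p))"
    and ext_z: "\<forall>lam. lam \<noteq> 0 \<longrightarrow> (\<forall>p\<in>U.
                   matrix_inv (Fl lam p) ** dz (Fl lam) p = extU lam u (hopfQ f (gauss F)) p)"
    and ext_zbar: "\<forall>lam. lam \<noteq> 0 \<longrightarrow> (\<forall>p\<in>U.
                   matrix_inv (Fl lam p) ** dzbar (Fl lam) p = extV lam u (hopfQ f (gauss F)) p)"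
    and ext_one: "\<forall>p\<in>U. Fl 1 p = F p"
  shows "\<forall>lam. lam \<noteq> 0 \<longrightarrow> (\<forall>p\<in>U. \<forall>psi :: complex \<Rightarrow> cvec. psi differentiable (at p) \<longrightarrow>
           (\<forall>X. assoc_conn (gauss F) lam psi p X = gauge_conn F (mc_form (Fl lam)) psi p X))"
proof (intro allI impI ballI)
  fix lam p :: complex and psi :: "complex \<Rightarrow> cvec" and X :: complex
  assume lam: "lam \<noteq> 0" and p: "p \<in> U" and psi: "psi differentiable (at p)"
  define Q where "Q = hopfQ f (gauss F)"
  obtain D where D: "(F has_derivative D) (at p)"
    using F_diff p by (auto simp: differentiable_def)
  have inv: "invertible (F p)"
    using F_SU2 p by (simp add: SU2_invertible)
  note F_inv_D = SU2_matrix_inv_has_derivative[OF D U_open p F_SU2]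
  have mc_ext: "mc_form (Fl l) p = ext_form l u Q p" if "l \<noteq> 0" for l
    unfolding ext_form_def
    by (rule ext, rule mc_form_wirtinger) (use that p ext_diff ext_z ext_zbar Q_def in auto)
  have "mc_form F p = mc_form (Fl 1) p"
    unfolding mc_form_def
    using frechet_derivative_transform_within_open[OF _ U_open p, of F "Fl 1"] F_diff p ext_one
    by (simp add: pd_def)
  then have mc_F: "mc_form F p = ext_form 1 u Q p"
    using mc_ext by simp
  have dN: "pd (gauss F) p h = conj_mat (F p) (ext_form 1 u Q p h ** smul (-\<i>) sigma3
                                                - smul (-\<i>) sigma3 ** ext_form 1 u Q p h)" for h
    unfolding gauss_eq_conj_mat pd_conj_mat[OF D F_inv_D inv] mc_F ..
  show "assoc_conn (gauss F) lam psi p X = gauge_conn F (mc_form (Fl lam)) psi p X"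
    unfolding assoc_conn_conj_mat[OF inv fun_cong[OF gauss_eq_conj_mat] dN]
      gauge_conn_eq[OF D F_inv_D inv psi] mc_F mc_ext[OF lam] frame_assoc_form_ext_form ..
qed

end
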